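(* Let $H$ be a forest and $S\subseteq V(H)$ such that every leaf of $H$ lies in $S$ and every connected component of $H$ has at least two vertices. Then there is a set $F^*\subseteq V(H)$ with $|F^*\cap S|\ge \frac12|S|$ such that every connected component of $H[F^*]$ is a quasi-$S$-clean subdivided star.
   Context: All graphs are finite and simple. A subdivided star is a graph with at least two vertices obtained from a star $K_{1,m}$ ($m\ge1$) by replacing its edges with paths of arbitrary positive length; in particular every path with at least two vertices is a subdivided star. If a subdivided star has a vertex of degree at least 3, that vertex is its center. A subdivided star $T$ is quasi-$S$-clean if every leaf of $T$ lies in $S$ and $V(T)\cap S$ consists of the leaves of $T$ plus possibly one further vertex, which in case $T$ has a vertex of degree at least 3 must be that center vertex (when $T$ is a path, the further vertex may be any single internal vertex). *)

theory Defs
  imports Main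
begin

definition graph :: "'a set \<Rightarrow> 'a set set \<Rightarrow> bool" where
  "graph V E \<longleftrightarrow> finite V \<and> (\<forall>e\<in>E. e \<subseteq> V \<and> card e = 2)"

definition degree :: "'a set set \<Rightarrow> 'a \<Rightarrow> nat" where
  "degree E v = card {u. {v, u} \<in> E}"

definition leaves :: "'a set \<Rightarrow> 'a set set \<Rightarrow> 'a set" where
  "leaves V E = {v \<in> V. degree E v = 1}"

definition induced :: "'a set set \<Rightarrow> 'a set \<Rightarrow> 'a set set" where
  "induced E X = {e \<in> E. e \<subseteq> X}"

definition reach :: "'a set set \<Rightarrow> 'a \<Rightarrow> 'a \<Rightarrow> bool" where
  "reach E = (\<lambda>x y. {x, y} \<in> E)\<^sup>*\<^sup>*"

definition connected_graph :: "'a set \<Rightarrow> 'a set set \<Rightarrow> bool" where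
  "connected_graph V E \<longleftrightarrow> V \<noteq> {} \<and> (\<forall>u\<in>V. \<forall>v\<in>V. reach E u v)"

definition components :: "'a set \<Rightarrow> 'a set set \<Rightarrow> 'a set set" where
  "components V E = {{u \<in> V. reach E v u} | v. v \<in> V}"

definition is_cycle :: "'a set set \<Rightarrow> 'a list \<Rightarrow> bool" where
  "is_cycle E xs \<longleftrightarrow> length xs \<ge> 3 \<and> distinct xs \<and>
     (\<forall>i. Suc i < length xs \<longrightarrow> {xs ! i, xs ! Suc i} \<in> E) \<and> {last xs, hd xs} \<in> E"

definition forest :: "'a set \<Rightarrow> 'a set set \<Rightarrow> bool" where
  "forest V E \<longleftrightarrow> graph V E \<and> \<not> (\<exists>xs. set xs \<subseteq> V \<and> is_cycle E xs)"

definition tree :: "'a set \<Rightarrow> 'a set set \<Rightarrow> bool" where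
  "tree V E \<longleftrightarrow> forest V E \<and> connected_graph V E"

text \<open>Subdivided star (obtained from K_{1,m}, m \<ge> 1, by subdividing edges):
  equivalently a tree with at least two vertices having at most one vertex of degree \<ge> 3.\<close>
definition subdivided_star :: "'a set \<Rightarrow> 'a set set \<Rightarrow> bool" where
  "subdivided_star V E \<longleftrightarrow> tree V E \<and> card V \<ge> 2 \<and>
     (\<forall>u\<in>V. \<forall>v\<in>V. degree E u \<ge> 3 \<and> degree E v \<ge> 3 \<longrightarrow> u = v)"

definition quasi_clean :: "'a set \<Rightarrow> 'a set \<Rightarrow> 'a set set \<Rightarrow> bool" where
  "quasi_clean S V E \<longleftrightarrow> subdivided_star V E \<and> leaves V E \<subseteq> S \<and>
     (\<exists>X. X \<subseteq> V \<and> card X \<le> 1 \<and> V \<inter> S = leaves V E \<union> X \<and>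
          (\<forall>x\<in>X. \<forall>v\<in>V. degree E v \<ge> 3 \<longrightarrow> x = v))"

end

theory Submission
  imports Defs
begin

lemma reach_refl [simp]: "reach E x x"
  unfolding reach_def by simp

lemma reach_trans: "reach E x y \<Longrightarrow> reach E y z \<Longrightarrow> reach E x z"
  unfolding reach_def by (rule rtranclp_trans)

lemma reach_step: "reach E x y \<Longrightarrow> {y, z} \<in> E \<Longrightarrow> reach E x z"
  unfolding reach_def by (rule rtranclp.rtrancl_into_rtrancl)

lemma reach_edge: "{x, y} \<in> E \<Longrightarrow> reach E x y"
  using reach_step[of E x x y] by simp

lemma reach_mono: "E \<subseteq> E' \<Longrightarrow> reach E x y \<Longrightarrow> reach E' x y"
  unfolding reach_def by (erule rtranclp_mono[THEN predicate2D, rotated]) auto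

lemma reach_induct [consumes 1, case_names base step]:
  assumes "reach E a b" "P a"
    and "\<And>y z. reach E a y \<Longrightarrow> {y, z} \<in> E \<Longrightarrow> P y \<Longrightarrow> P z"
  shows "P b"
  using assms(1) unfolding reach_def
proof (induction rule: rtranclp_induct)
  case base
  then show ?case using assms(2) by simp
next
  case (step y z)
  then show ?case using assms(3) unfolding reach_def by blast
qed

lemma reach_sym: "reach E x y \<Longrightarrow> reach E y x"
proof (induction rule: reach_induct)
  case (step y z)
  have "{z, y} \<in> E" using step(2) by (simp add: insert_commute)
  then show ?case using step(3) unfolding reach_def by (rule converse_rtranclp_into_rtranclp)
qed simp

lemma induced_mono: "A \<subseteq> B \<Longrightarrow> induced E A \<subseteq> induced E B"
  by (auto simp: induced_def)

lemma induced_subset: "induced E A \<subseteq> E"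
  by (auto simp: induced_def)

lemma reach_induced_restrict:
  assumes "reach (induced E W) a b"
  shows "reach (induced E {x \<in> W. reach (induced E W) a x}) a b"
  using assms
proof (induction rule: reach_induct)
  case (step y z)
  then have "{y, z} \<in> induced E {x \<in> W. reach (induced E W) a x}"
    using reach_step[OF step(1,2)] by (auto simp: induced_def)
  with step(3) show ?case by (rule reach_step)
qed simp

lemma degree_induced: "x \<in> K \<Longrightarrow> degree (induced E K) x = card {w \<in> K. {x, w} \<in> E}"
proof -
  assume "x \<in> K"
  then have "{w. {x, w} \<in> induced E K} = {w \<in> K. {x, w} \<in> E}" by (auto simp: induced_def)
  then show ?thesis unfolding degree_def by simp
qed

lemma degree_induced_pos:
  assumes "finite K" "connected_graph K (induced E K)" "x \<in> K" "y \<in> K" "x \<noteq> y"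
  shows "1 \<le> degree (induced E K) x"
proof -
  have "reach (induced E K) y x" using assms(2-4) unfolding connected_graph_def by blast
  then have "x = y \<or> (\<exists>w. {w, x} \<in> induced E K)"
    by (induction rule: reach_induct) auto
  then obtain w where "w \<in> K" "{x, w} \<in> E"
    using assms(5) by (auto simp: induced_def insert_commute)
  then have "{w \<in> K. {x, w} \<in> E} \<noteq> {}" by blast
  then show ?thesis using degree_induced[OF assms(3)] assms(1) by (simp add: Suc_le_eq card_gt_0_iff)
qed

fun walk :: "'a set set \<Rightarrow> 'a list \<Rightarrow> bool" where
  "walk E (x # y # xs) \<longleftrightarrow> {x, y} \<in> E \<and> walk E (y # xs)"
| "walk E _ \<longleftrightarrow> True"

lemma walk_iff_nth: "walk E xs \<longleftrightarrow> (\<forall>i. Suc i < length xs \<longrightarrow> {xs ! i, xs ! Suc i} \<in> E)"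
proof (induction E xs rule: walk.induct)
  case (1 E x y xs)
  show ?case
  proof
    assume "walk E (x # y # xs)"
    then show "\<forall>i. Suc i < length (x # y # xs) \<longrightarrow> {(x # y # xs) ! i, (x # y # xs) ! Suc i} \<in> E"
      using 1 by (auto simp: nth_Cons split: nat.splits)
  next
    assume H: "\<forall>i. Suc i < length (x # y # xs) \<longrightarrow> {(x # y # xs) ! i, (x # y # xs) ! Suc i} \<in> E"
    then have "\<forall>i. Suc i < length (y # xs) \<longrightarrow> {(y # xs) ! i, (y # xs) ! Suc i} \<in> E"
      by (metis Suc_less_eq length_Cons nth_Cons_Suc)
    then show "walk E (x # y # xs)" using 1 H[rule_format, of 0] by simp
  qed
qed auto

lemma walk_append: "walk E (xs @ y # ys) \<longleftrightarrow> walk E (xs @ [y]) \<and> walk E (y # ys)"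
  by (induction xs rule: walk.induct) auto

lemma walk_mono: "walk E xs \<Longrightarrow> E \<subseteq> E' \<Longrightarrow> walk E' xs"
  by (induction E xs rule: walk.induct) auto

lemma reach_imp_walk:
  assumes "reach E a b"
  obtains xs where "xs \<noteq> []" "hd xs = a" "last xs = b" "walk E xs"
proof -
  from assms have "\<exists>xs. xs \<noteq> [] \<and> hd xs = a \<and> last xs = b \<and> walk E xs"
  proof (induction rule: reach_induct)
    case base
    then show ?case by (intro exI[of _ "[a]"]) simp
  next
    case (step y z)
    then obtain xs where xs: "xs \<noteq> []" "hd xs = a" "last xs = y" "walk E xs" by blast
    then obtain ys where "xs = ys @ [y]" by (metis append_butlast_last_id)
    with xs step(2) show ?case
      by (intro exI[of _ "ys @ [y, z]"]) (auto simp: walk_append[of E ys y "[z]"] hd_append)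
  qed
  then show ?thesis using that by blast
qed

text \<open>Shortcutting a repeated vertex keeps a walk a walk, so every walk contains a path.\<close>

lemma walk_imp_path:
  assumes "walk E xs" "xs \<noteq> []"
  obtains ys where "ys \<noteq> []" "hd ys = hd xs" "last ys = last xs" "walk E ys" "distinct ys"
    "set ys \<subseteq> set xs"
proof -
  from assms have "\<exists>ys. ys \<noteq> [] \<and> hd ys = hd xs \<and> last ys = last xs \<and> walk E ys \<and>
      distinct ys \<and> set ys \<subseteq> set xs"
  proof (induction "length xs" arbitrary: xs rule: less_induct)
    case less
    show ?case
    proof (cases "distinct xs")
      case False
      then obtain as y bs cs where xs: "xs = as @ [y] @ bs @ [y] @ cs"
        using not_distinct_decomp by blast
      let ?zs = "as @ [y] @ cs"
      have "walk E (as @ [y])" "walk E ((y # bs) @ y # cs)"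
        using less.prems(1) xs walk_append[of E as y "bs @ y # cs"] by simp_all
      then have "walk E ?zs"
        using walk_append[of E "y # bs" y cs] walk_append[of E as y cs] by simp
      moreover have "length ?zs < length xs" using xs by simp
      ultimately obtain ys where "ys \<noteq> []" "hd ys = hd ?zs" "last ys = last ?zs" "walk E ys"
        "distinct ys" "set ys \<subseteq> set ?zs"
        using less.hyps by blast
      moreover have "hd ?zs = hd xs" "last ?zs = last xs" "set ?zs \<subseteq> set xs"
        using xs by (cases as; cases cs; auto)+
      ultimately show ?thesis by auto
    qed (use less.prems in blast)
  qed
  then show ?thesis using that by blast
qed

lemma walk_induced_subset:
  assumes "walk (induced E W) xs" "2 \<le> length xs"
  shows "set xs \<subseteq> W"
proof
  fix x assume "x \<in> set xs"
  then obtain i where i: "i < length xs" "xs ! i = x" by (auto simp: in_set_conv_nth)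
  have W: "\<And>j. Suc j < length xs \<Longrightarrow> {xs ! j, xs ! Suc j} \<in> induced E W"
    using assms(1) walk_iff_nth by metis
  show "x \<in> W"
  proof (cases "Suc i < length xs")
    case True
    then show ?thesis using W[OF True] i by (auto simp: induced_def)
  next
    case False
    then obtain j where "i = Suc j" using assms(2) i by (cases i) auto
    then show ?thesis using W[of j] i by (auto simp: induced_def)
  qed
qed

locale forest_graph =
  fixes V :: "'a set" and E :: "'a set set"
  assumes forest: "forest V E"
begin

lemma finite_V: "finite V"
  using forest by (simp add: forest_def graph_def)

lemma edge_card: "e \<in> E \<Longrightarrow> e \<subseteq> V \<and> card e = 2"
  using forest by (simp add: forest_def graph_def)

lemma edge_neq: "{x, y} \<in> E \<Longrightarrow> x \<noteq> y"
  using edge_card[of "{x, y}"] by auto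

lemma edge_vertices: "{x, y} \<in> E \<Longrightarrow> x \<in> V \<and> y \<in> V"
  using edge_card[of "{x, y}"] by auto

lemma induced_V: "induced E V = E"
  using edge_card by (auto simp: induced_def)

lemma degree_induced_singleton: "degree (induced E {c}) c = 0"
proof -
  have "{c} \<notin> E" using edge_card[of "{c}"] by auto
  then show ?thesis using degree_induced[of c "{c}"] by simp
qed

lemma forest_induced:
  assumes "K \<subseteq> V"
  shows "forest K (induced E K)"
proof -
  have "graph K (induced E K)"
    using assms finite_subset[OF assms finite_V] edge_card unfolding graph_def induced_def by blast
  moreover have "is_cycle E xs" if "is_cycle (induced E K) xs" for xs
    using that induced_subset unfolding is_cycle_def by blast
  ultimately show ?thesis using forest assms unfolding forest_def by blast
qed

lemma no_path_between_neighbours: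
  assumes "{v, c} \<in> E" "{v, c'} \<in> E" "c \<noteq> c'" "v \<notin> W" "W \<subseteq> V"
  shows "\<not> reach (induced E W) c c'"
proof
  assume "reach (induced E W) c c'"
  then obtain xs where xs: "xs \<noteq> []" "hd xs = c" "last xs = c'" "walk (induced E W) xs"
    by (rule reach_imp_walk)
  obtain ys where ys: "ys \<noteq> []" "hd ys = c" "last ys = c'" "walk (induced E W) ys"
    "distinct ys"
    using walk_imp_path[OF xs(4,1)] xs(2,3) by metis
  have len: "2 \<le> length ys"
    using ys(1-3) assms(3) by (cases ys; cases "tl ys") auto
  have W: "set ys \<subseteq> W" using walk_induced_subset[OF ys(4) len] .
  have "walk E (v # ys)"
    using walk_mono[OF ys(4) induced_subset] assms(1) ys(1,2) by (cases ys) auto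
  moreover have "distinct (v # ys)" using ys(5) W assms(4) by auto
  moreover have "{last (v # ys), hd (v # ys)} \<in> E"
    using ys(1,3) assms(2) by (simp add: insert_commute)
  ultimately have "is_cycle E (v # ys)"
    using len unfolding is_cycle_def walk_iff_nth by simp
  moreover have "set (v # ys) \<subseteq> V" using W assms(1,5) edge_vertices by auto
  ultimately show False using forest unfolding forest_def by blast
qed

text \<open>A rooted subtree is the vertex set of a subtree hanging from its root \<open>v\<close>:
  it is connected, and only \<open>v\<close> may have neighbours outside of it (its parent).\<close>

definition rooted_subtree :: "'a set \<Rightarrow> 'a \<Rightarrow> bool" where
  "rooted_subtree T v \<longleftrightarrow> T \<subseteq> V \<and> v \<in> T \<and> (\<forall>x\<in>T. reach (induced E T) v x) \<and>
     (\<forall>x\<in>T. \<forall>y. {x, y} \<in> E \<longrightarrow> y \<notin> T \<longrightarrow> x = v)"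

definition children :: "'a set \<Rightarrow> 'a \<Rightarrow> 'a set" where
  "children T v = {c \<in> T. {v, c} \<in> E}"

definition branch :: "'a set \<Rightarrow> 'a \<Rightarrow> 'a \<Rightarrow> 'a set" where
  "branch T v c = {x \<in> T - {v}. reach (induced E (T - {v})) c x}"

lemma branch_subset: "branch T v c \<subseteq> T - {v}"
  by (auto simp: branch_def)

lemma rooted_subtree_finite: "rooted_subtree T v \<Longrightarrow> finite T"
  using finite_subset[OF _ finite_V] by (simp add: rooted_subtree_def)

lemma finite_children: "rooted_subtree T v \<Longrightarrow> finite (children T v)"
  using rooted_subtree_finite by (simp add: children_def)

lemma finite_branch: "rooted_subtree T v \<Longrightarrow> finite (branch T v c)"
  using rooted_subtree_finite finite_subset[OF branch_subset] by blast

lemma child_in_branch: "c \<in> children T v \<Longrightarrow> c \<in> branch T v c"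
  using edge_neq by (auto simp: children_def branch_def)

lemma branch_unique:
  assumes "rooted_subtree T v" "c \<in> children T v" "c' \<in> children T v"
    and "x \<in> branch T v c" "x \<in> branch T v c'"
  shows "c = c'"
proof (rule ccontr)
  assume "c \<noteq> c'"
  moreover have "reach (induced E (T - {v})) c x" "reach (induced E (T - {v})) c' x"
    using assms(4,5) unfolding branch_def by blast+
  then have "reach (induced E (T - {v})) c c'" by (metis reach_sym reach_trans)
  ultimately show False
    using no_path_between_neighbours[of v c c' "T - {v}"] assms(1-3)
    by (auto simp: children_def rooted_subtree_def)
qed

lemma branch_closed:
  assumes "x \<in> branch T v c" "{x, y} \<in> E" "y \<in> T" "y \<noteq> v"
  shows "y \<in> branch T v c"
proof -
  have "{x, y} \<in> induced E (T - {v})"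
    using assms branch_subset by (auto simp: induced_def)
  moreover have "reach (induced E (T - {v})) c x" using assms(1) by (simp add: branch_def)
  ultimately show ?thesis using assms(3,4) reach_step[of _ c x y] by (simp add: branch_def)
qed

lemma branches_no_edge:
  assumes "rooted_subtree T v" "c \<in> children T v" "c' \<in> children T v" "c \<noteq> c'"
    and "x \<in> branch T v c" "y \<in> branch T v c'"
  shows "{x, y} \<notin> E"
  using branch_closed[OF assms(5)] branch_unique[OF assms(1-3)] assms(4,6) branch_subset by blast

lemma branch_root_neighbour:
  assumes "rooted_subtree T v" "c \<in> children T v" "x \<in> branch T v c" "{v, x} \<in> E"
  shows "x = c"
proof -
  have "x \<in> children T v" using assms(3,4) branch_subset by (auto simp: children_def)
  then show ?thesis using branch_unique[OF assms(1,2) _ assms(3)] child_in_branch by blast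
qed

lemma rooted_subtree_branch:
  assumes "rooted_subtree T v" "c \<in> children T v"
  shows "rooted_subtree (branch T v c) c"
  unfolding rooted_subtree_def
proof (intro conjI ballI allI impI)
  show "branch T v c \<subseteq> V" using assms(1) branch_subset by (force simp: rooted_subtree_def)
  show "c \<in> branch T v c" using child_in_branch[OF assms(2)] .
next
  fix x assume "x \<in> branch T v c"
  then show "reach (induced E (branch T v c)) c x"
    using reach_induced_restrict unfolding branch_def by fastforce
next
  fix x y assume x: "x \<in> branch T v c" and e: "{x, y} \<in> E" and y: "y \<notin> branch T v c"
  have "x \<in> T" "x \<noteq> v" using x branch_subset by auto
  then consider "y \<notin> T" | "y = v" | "y \<in> T" "y \<noteq> v" by blast
  then show "x = c"
  proof cases
    case 1
    then show ?thesis using assms(1) \<open>x \<in> T\<close> \<open>x \<noteq> v\<close> e by (auto simp: rooted_subtree_def)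
  next
    case 2
    then show ?thesis using branch_root_neighbour[OF assms x] e by (simp add: insert_commute)
  next
    case 3
    then show ?thesis using branch_closed[OF x e] y by blast
  qed
qed

lemma rooted_subtree_decomp:
  assumes "rooted_subtree T v"
  shows "T = insert v (\<Union>c\<in>children T v. branch T v c)"
proof -
  have cover: "x = v \<or> (\<exists>c\<in>children T v. x \<in> branch T v c)" if "x \<in> T" for x
  proof -
    have "reach (induced E T) v x" using assms that by (auto simp: rooted_subtree_def)
    then show ?thesis
    proof (induction rule: reach_induct)
      case (step y z)
      have e: "{y, z} \<in> E" "y \<in> T" "z \<in> T" using step(2) by (auto simp: induced_def)
      show ?case
      proof (cases "y = v")
        case True
        then show ?thesis using e child_in_branch by (force simp: children_def)
      qed (use step(3) e branch_closed in blast)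
    qed simp
  qed
  show ?thesis
  proof
    show "T \<subseteq> insert v (\<Union>c\<in>children T v. branch T v c)" using cover by blast
    show "insert v (\<Union>c\<in>children T v. branch T v c) \<subseteq> T"
      using assms branch_subset[of T v] by (auto simp: rooted_subtree_def)
  qed
qed

lemma card_branch_less:
  assumes "rooted_subtree T v"
  shows "card (branch T v c) < card T"
  using assms branch_subset[of T v c] rooted_subtree_finite[OF assms]
  by (intro psubset_card_mono) (auto simp: rooted_subtree_def)

end

context forest_graph
begin

abbreviation deg :: "'a set \<Rightarrow> 'a \<Rightarrow> nat" where
  "deg K \<equiv> degree (induced E K)"

definition separated :: "'a set \<Rightarrow> 'a set \<Rightarrow> bool" where
  "separated A B \<longleftrightarrow> A \<inter> B = {} \<and> (\<forall>x\<in>A. \<forall>y\<in>B. {x, y} \<notin> E)"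

lemma separated_sym: "separated A B \<Longrightarrow> separated B A"
  unfolding separated_def by (metis Int_commute insert_commute)

lemma separated_mono: "separated A B \<Longrightarrow> A' \<subseteq> A \<Longrightarrow> B' \<subseteq> B \<Longrightarrow> separated A' B'"
  unfolding separated_def by blast

lemma separated_branches:
  assumes "rooted_subtree T v" "c \<in> children T v" "c' \<in> children T v" "c \<noteq> c'"
  shows "separated (branch T v c) (branch T v c')"
  using branch_unique[OF assms(1-3)] branches_no_edge[OF assms] assms(4)
  unfolding separated_def by blast

lemma card_Int_UN_branches:
  assumes "rooted_subtree T v" "\<And>c. c \<in> children T v \<Longrightarrow> g c \<subseteq> branch T v c"
  shows "card ((\<Union>c\<in>children T v. g c) \<inter> A) = (\<Sum>c\<in>children T v. card (g c \<inter> A))"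
proof -
  have "(\<Union>c\<in>children T v. g c) \<inter> A = (\<Union>c\<in>children T v. g c \<inter> A)" by blast
  moreover have "card (\<Union>c\<in>children T v. g c \<inter> A) = (\<Sum>c\<in>children T v. card (g c \<inter> A))"
  proof (rule card_UN_disjoint)
    show "finite (children T v)" using finite_children[OF assms(1)] .
    show "\<forall>c\<in>children T v. finite (g c \<inter> A)"
      using finite_subset[OF assms(2) finite_branch[OF assms(1)]] by simp
    show "\<forall>c\<in>children T v. \<forall>c'\<in>children T v. c \<noteq> c' \<longrightarrow> g c \<inter> A \<inter> (g c' \<inter> A) = {}"
      using assms(2) separated_branches[OF assms(1)] unfolding separated_def by blast
  qed
  ultimately show ?thesis by simp
qed

lemma card_Int_root_UN_branches:
  assumes "rooted_subtree T v" "\<And>c. c \<in> children T v \<Longrightarrow> g c \<subseteq> branch T v c"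
  shows "card (insert v (\<Union>c\<in>children T v. g c) \<inter> A)
    = of_bool (v \<in> A) + (\<Sum>c\<in>children T v. card (g c \<inter> A))"
proof -
  have "v \<notin> (\<Union>c\<in>children T v. g c)" using assms(2) branch_subset by blast
  moreover have "finite (\<Union>c\<in>children T v. g c)"
    using finite_subset[OF assms(2) finite_branch[OF assms(1)]] finite_children[OF assms(1)]
    by simp
  ultimately show ?thesis
    using card_Int_UN_branches[OF assms, of A] by (cases "v \<in> A") simp_all
qed

end

locale terminal_forest = forest_graph V E for V :: "'a set" and E :: "'a set set" +
  fixes S :: "'a set"
begin

definition star_packing :: "'a set \<Rightarrow> bool" where
  "star_packing F \<longleftrightarrow> (\<exists>KK. \<Union>KK = F \<and> (\<forall>K\<in>KK. quasi_clean S K (induced E K)) \<and>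
     pairwise separated KK)"

lemma star_packing_empty [simp]: "star_packing {}"
  unfolding star_packing_def by (intro exI[of _ "{}"]) simp

lemma star_packing_quasi_clean: "quasi_clean S K (induced E K) \<Longrightarrow> star_packing K"
  unfolding star_packing_def by (intro exI[of _ "{K}"]) simp

lemma star_packing_Union:
  assumes "\<And>A. A \<in> \<A> \<Longrightarrow> star_packing A" "pairwise separated \<A>"
  shows "star_packing (\<Union>\<A>)"
proof -
  have "\<forall>A\<in>\<A>. \<exists>KK. \<Union>KK = A \<and> (\<forall>K\<in>KK. quasi_clean S K (induced E K)) \<and>
      pairwise separated KK"
    using assms(1) unfolding star_packing_def by blast
  from bchoice[OF this] obtain KK where "\<forall>A\<in>\<A>. \<Union>(KK A) = A \<and>
      (\<forall>K\<in>KK A. quasi_clean S K (induced E K)) \<and> pairwise separated (KK A)"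
    by blast
  then have KK: "\<And>A. A \<in> \<A> \<Longrightarrow> \<Union>(KK A) = A"
      "\<And>A K. A \<in> \<A> \<Longrightarrow> K \<in> KK A \<Longrightarrow> quasi_clean S K (induced E K)"
      "\<And>A. A \<in> \<A> \<Longrightarrow> pairwise separated (KK A)"
    by blast+
  have "pairwise separated (\<Union>A\<in>\<A>. KK A)"
  proof (rule pairwiseI)
    fix K K' assume "K \<in> (\<Union>A\<in>\<A>. KK A)" "K' \<in> (\<Union>A\<in>\<A>. KK A)" "K \<noteq> K'"
    then obtain A A' where A: "A \<in> \<A>" "K \<in> KK A" and A': "A' \<in> \<A>" "K' \<in> KK A'" by blast
    show "separated K K'"
    proof (cases "A = A'")
      case True
      then show ?thesis using KK(3)[OF A(1)] A(2) A'(2) \<open>K \<noteq> K'\<close> unfolding pairwise_def by blast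
    next
      case False
      then have "separated A A'" using assms(2) A(1) A'(1) unfolding pairwise_def by blast
      moreover have "K \<subseteq> A" "K' \<subseteq> A'" using KK(1) A A' by blast+
      ultimately show ?thesis by (rule separated_mono)
    qed
  qed
  moreover have "\<Union>(\<Union>A\<in>\<A>. KK A) = \<Union>\<A>" using KK(1) by blast
  moreover have "\<forall>K\<in>(\<Union>A\<in>\<A>. KK A). quasi_clean S K (induced E K)" using KK(2) by blast
  ultimately show ?thesis unfolding star_packing_def by blast
qed

lemma star_packing_Un:
  "star_packing A \<Longrightarrow> star_packing B \<Longrightarrow> separated A B \<Longrightarrow> star_packing (A \<union> B)"
  using star_packing_Union[of "{A, B}"] separated_sym by (auto simp: pairwise_insert)

lemma star_packing_UN:
  assumes "\<And>i. i \<in> I \<Longrightarrow> star_packing (g i)"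
    and "\<And>i j. i \<in> I \<Longrightarrow> j \<in> I \<Longrightarrow> i \<noteq> j \<Longrightarrow> separated (g i) (g j)"
  shows "star_packing (\<Union>i\<in>I. g i)"
  using assms by (intro star_packing_Union) (auto simp: pairwise_def)

lemma star_packing_components:
  assumes "star_packing F" "C \<in> components F (induced E F)"
  shows "quasi_clean S C (induced E C)"
proof -
  obtain KK where KK: "\<Union>KK = F" "\<And>K. K \<in> KK \<Longrightarrow> quasi_clean S K (induced E K)"
    "pairwise separated KK"
    using assms(1) unfolding star_packing_def by blast
  obtain w where w: "w \<in> F" "C = {u \<in> F. reach (induced E F) w u}"
    using assms(2) unfolding components_def by blast
  obtain K where K: "K \<in> KK" "w \<in> K" using KK(1) w(1) by blast
  have "K \<subseteq> C"
  proof
    fix u assume "u \<in> K"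
    then have "reach (induced E K) w u"
      using KK(2)[OF K(1)] K(2)
      unfolding quasi_clean_def subdivided_star_def tree_def connected_graph_def by blast
    moreover have "K \<subseteq> F" using K(1) KK(1) by blast
    ultimately show "u \<in> C"
      using w(2) \<open>u \<in> K\<close> reach_mono[OF induced_mono[of K F]] by blast
  qed
  moreover have "u \<in> K" if "u \<in> C" for u
  proof -
    have "reach (induced E F) w u" using that w(2) by blast
    then show ?thesis
    proof (induction rule: reach_induct)
      case (step y z)
      have "{y, z} \<in> E" "z \<in> F" using step(2) by (auto simp: induced_def)
      moreover obtain K' where K': "K' \<in> KK" "z \<in> K'" using KK(1) \<open>z \<in> F\<close> by blast
      ultimately have "\<not> separated K K'" using step(3) unfolding separated_def by blast
      then have "K = K'" using KK(3) K(1) K'(1) unfolding pairwise_def by blast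
      then show ?case using K'(2) by simp
    qed (use K(2) in simp)
  qed
  ultimately have "C = K" by blast
  then show ?thesis using KK(2) K(1) by simp
qed

text \<open>A pending path at \<open>v\<close> is a path from \<open>v\<close> to its only terminal \<open>s\<close>; it becomes a leg of a
  subdivided star once \<open>v\<close> is attached to a centre.\<close>

definition pending_path :: "'a \<Rightarrow> 'a \<Rightarrow> 'a set \<Rightarrow> bool" where
  "pending_path v s K \<longleftrightarrow> finite K \<and> v \<in> K \<and> K \<inter> S = {s} \<and> connected_graph K (induced E K) \<and>
     (\<forall>u\<in>K. deg K u \<le> 2 \<and> (deg K u \<le> 1 \<longleftrightarrow> u = v \<or> u = s)) \<and> (s = v \<longrightarrow> K = {v})"

definition pending_packing :: "'a set \<Rightarrow> 'a \<Rightarrow> 'a set \<Rightarrow> bool" where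
  "pending_packing T v F \<longleftrightarrow> F \<subseteq> T \<and>
     (\<exists>s K R. F = K \<union> R \<and> pending_path v s K \<and> star_packing R \<and> separated K R)"

lemma pending_path_isolated:
  assumes "pending_path c s K" "deg K c = 0"
  shows "K = {c}"
proof (rule ccontr)
  assume "K \<noteq> {c}"
  moreover have "c \<in> K" using assms(1) by (simp add: pending_path_def)
  ultimately obtain y where "y \<in> K" "y \<noteq> c" by blast
  then show False
    using assms degree_induced_pos[of K E c y] unfolding pending_path_def by auto
qed

end

context terminal_forest
begin

text \<open>A spider: the root \<open>v\<close> together with pending paths (its legs) in the branches of
  some of its children.\<close>

context
  fixes T v P K t
  assumes rooted: "rooted_subtree T v" and P: "P \<subseteq> children T v"
    and leg: "\<And>c. c \<in> P \<Longrightarrow> pending_path c (t c) (K c)"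
    and leg_branch: "\<And>c. c \<in> P \<Longrightarrow> K c \<subseteq> branch T v c"
begin

lemma child_in_leg: "c \<in> P \<Longrightarrow> c \<in> K c"
  using leg unfolding pending_path_def by blast

lemma leg_subset: "c \<in> P \<Longrightarrow> K c \<subseteq> T - {v}"
  using leg_branch[of c] branch_subset[of T v c] by (rule subset_trans)

lemma root_notin_leg: "c \<in> P \<Longrightarrow> v \<notin> K c"
  using leg_subset by blast

lemma spider_subset: "insert v (\<Union>c\<in>P. K c) \<subseteq> T"
proof -
  have "v \<in> T" using rooted by (simp add: rooted_subtree_def)
  then show ?thesis using leg_subset by blast
qed

lemma finite_spider: "finite (insert v (\<Union>c\<in>P. K c))"
  by (rule finite_subset[OF spider_subset rooted_subtree_finite[OF rooted]])

lemma spider_degree_root: "deg (insert v (\<Union>c\<in>P. K c)) v = card P"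
proof -
  have "w \<in> P" if w: "w \<in> (\<Union>c\<in>P. K c)" and e: "{v, w} \<in> E" for w
  proof -
    obtain c where c: "c \<in> P" "w \<in> K c" using w by blast
    then have "w = c" using branch_root_neighbour[OF rooted _ _ e] leg_branch P by blast
    then show ?thesis using c(1) by simp
  qed
  moreover have "{v, c} \<in> E" if "c \<in> P" for c using that P by (auto simp: children_def)
  ultimately have "{w \<in> insert v (\<Union>c\<in>P. K c). {v, w} \<in> E} = P"
    using child_in_leg edge_neq by blast
  then show ?thesis using degree_induced[of v] by simp
qed

lemma spider_degree_leg:
  assumes c: "c \<in> P" and u: "u \<in> K c"
  shows "deg (insert v (\<Union>c\<in>P. K c)) u = deg (K c) u + of_bool (u = c)"
proof -
  have cc: "c \<in> children T v" and ub: "u \<in> branch T v c" using c u P leg_branch by blast+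
  have nbhd: "{w \<in> insert v (\<Union>c\<in>P. K c). {u, w} \<in> E} =
      {w \<in> K c. {u, w} \<in> E} \<union> {w. w = v \<and> u = c}"
  proof (intro equalityI subsetI)
    fix w assume w: "w \<in> {w \<in> insert v (\<Union>c\<in>P. K c). {u, w} \<in> E}"
    then consider "w = v" | c' where "c' \<in> P" "w \<in> K c'" by blast
    then show "w \<in> {w \<in> K c. {u, w} \<in> E} \<union> {w. w = v \<and> u = c}"
    proof cases
      case 1
      then show ?thesis
        using w branch_root_neighbour[OF rooted cc ub] by (auto simp: insert_commute)
    next
      case 2
      then have "c' = c"
        using w branches_no_edge[OF rooted cc _ _ ub] P leg_branch by blast
      then show ?thesis using 2 w by blast
    qed
  qed (use c u P child_in_leg in \<open>auto simp: children_def insert_commute\<close>)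
  have "u \<in> insert v (\<Union>c\<in>P. K c)" using c u by blast
  then have "deg (insert v (\<Union>c\<in>P. K c)) u = card {w \<in> insert v (\<Union>c\<in>P. K c). {u, w} \<in> E}"
    by (rule degree_induced)
  also have "\<dots> = card ({w \<in> K c. {u, w} \<in> E} \<union> {w. w = v \<and> u = c})"
    unfolding nbhd ..
  also have "\<dots> = card {w \<in> K c. {u, w} \<in> E} + card {w. w = v \<and> u = c}"
    using leg[OF c] root_notin_leg[OF c]
    by (intro card_Un_disjoint) (auto simp: pending_path_def)
  also have "\<dots> = deg (K c) u + of_bool (u = c)"
    using degree_induced[OF u] by (cases "u = c") auto
  finally show ?thesis .
qed

lemma spider_connected:
  "connected_graph (insert v (\<Union>c\<in>P. K c)) (induced E (insert v (\<Union>c\<in>P. K c)))"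
proof -
  let ?K = "insert v (\<Union>c\<in>P. K c)"
  have from_root: "reach (induced E ?K) v x" if x: "x \<in> ?K" for x
  proof (cases "x = v")
    case False
    then obtain c where c: "c \<in> P" "x \<in> K c" using x by blast
    have "K c \<subseteq> ?K" using c(1) by blast
    moreover have "reach (induced E (K c)) c x"
      using leg[OF c(1)] c(2) child_in_leg[OF c(1)]
      unfolding pending_path_def connected_graph_def by blast
    ultimately have "reach (induced E ?K) c x" by (rule reach_mono[OF induced_mono])
    moreover have "{v, c} \<in> induced E ?K"
      using c(1) P child_in_leg[OF c(1)] by (auto simp: children_def induced_def)
    ultimately show ?thesis by (metis reach_edge reach_trans)
  qed simp
  have "reach (induced E ?K) x y" if "x \<in> ?K" "y \<in> ?K" for x y
    using reach_trans[OF reach_sym[OF from_root[OF that(1)]] from_root[OF that(2)]] .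
  then show ?thesis unfolding connected_graph_def by blast
qed

lemma spider_leg_degree:
  assumes c: "c \<in> P" and u: "u \<in> K c"
  shows "1 \<le> deg (insert v (\<Union>c\<in>P. K c)) u" "deg (insert v (\<Union>c\<in>P. K c)) u \<le> 2"
    and "deg (insert v (\<Union>c\<in>P. K c)) u \<le> 1 \<longleftrightarrow> u = t c"
proof -
  have p: "finite (K c)" "c \<in> K c" "K c \<inter> S = {t c}" "connected_graph (K c) (induced E (K c))"
    "\<And>u. u \<in> K c \<Longrightarrow> deg (K c) u \<le> 2 \<and> (deg (K c) u \<le> 1 \<longleftrightarrow> u = c \<or> u = t c)"
    "t c = c \<Longrightarrow> K c = {c}"
    using leg[OF c] unfolding pending_path_def by blast+
  note d = spider_degree_leg[OF c u]
  show "1 \<le> deg (insert v (\<Union>c\<in>P. K c)) u"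
    using d degree_induced_pos[OF p(1,4) u p(2)] by (cases "u = c") auto
  show "deg (insert v (\<Union>c\<in>P. K c)) u \<le> 2"
    using d p(5)[OF u] p(5)[OF p(2)] by (cases "u = c") auto
  show "deg (insert v (\<Union>c\<in>P. K c)) u \<le> 1 \<longleftrightarrow> u = t c"
  proof (cases "u = c")
    case True
    have "deg (K c) c = 0 \<longleftrightarrow> t c = c"
      using pending_path_isolated[OF leg[OF c]] p(3,6) degree_induced_singleton by auto
    then show ?thesis using d True by auto
  qed (use d p(5)[OF u] in auto)
qed

lemma spider_Int_S: "insert v (\<Union>c\<in>P. K c) \<inter> S = ({v} \<inter> S) \<union> t ` P"
  using leg unfolding pending_path_def by blast

lemma spider_quasi_clean:
  assumes "2 \<le> card P + of_bool (v \<in> S)"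
  shows "quasi_clean S (insert v (\<Union>c\<in>P. K c)) (induced E (insert v (\<Union>c\<in>P. K c)))"
proof -
  let ?K = "insert v (\<Union>c\<in>P. K c)"
  have "P \<noteq> {}" using assms by (cases "v \<in> S") auto
  then obtain c where c: "c \<in> P" by blast
  have "card {v, c} \<le> card ?K"
    using c child_in_leg[OF c] finite_spider by (intro card_mono) auto
  moreover have "v \<noteq> c" using root_notin_leg[OF c] child_in_leg[OF c] by blast
  ultimately have card2: "2 \<le> card ?K" by simp
  have other: "\<exists>c\<in>P. u \<in> K c" if "u \<in> ?K" "u \<noteq> v" for u using that by blast
  have centre: "u = v" if "u \<in> ?K" "3 \<le> deg ?K u" for u
    using that other spider_leg_degree(2) by fastforce
  have leaves_S: "u \<in> S" if u: "u \<in> leaves ?K (induced E ?K)" for u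
  proof (cases "u = v")
    case True
    then show ?thesis
      using u spider_degree_root assms by (cases "v \<in> S") (auto simp: leaves_def)
  next
    case False
    then obtain c where "c \<in> P" "u \<in> K c" using u by (auto simp: leaves_def)
    then show ?thesis
      using u spider_leg_degree(3)[of c u] spider_Int_S by (auto simp: leaves_def)
  qed
  have terminal_leaf: "t c \<in> leaves ?K (induced E ?K)" if c: "c \<in> P" for c
  proof -
    have "t c \<in> K c" using leg[OF c] by (auto simp: pending_path_def)
    then show ?thesis using c spider_leg_degree[of c "t c"] by (force simp: leaves_def)
  qed
  have KS: "?K \<inter> S = leaves ?K (induced E ?K) \<union> ({v} \<inter> S)"
  proof
    show "?K \<inter> S \<subseteq> leaves ?K (induced E ?K) \<union> ({v} \<inter> S)"
      using spider_Int_S terminal_leaf by blast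
    show "leaves ?K (induced E ?K) \<union> ({v} \<inter> S) \<subseteq> ?K \<inter> S"
      using leaves_S by (auto simp: leaves_def)
  qed
  have "?K \<subseteq> V" using spider_subset rooted by (auto simp: rooted_subtree_def)
  then have "tree ?K (induced E ?K)"
    using forest_induced spider_connected unfolding tree_def by blast
  then show ?thesis
    unfolding quasi_clean_def subdivided_star_def
  proof (intro conjI exI[of _ "{v} \<inter> S"])
    show "card ({v} \<inter> S) \<le> 1" by (cases "v \<in> S") auto
  qed (use card2 centre leaves_S KS in blast)+
qed

lemma spider_pending_path:
  assumes "card P + of_bool (v \<in> S) = 1"
  obtains s where "pending_path v s (insert v (\<Union>c\<in>P. K c))"
proof (cases "P = {}")
  case True
  then have "v \<in> S" using assms by (cases "v \<in> S") auto
  then have "pending_path v v (insert v (\<Union>c\<in>P. K c))"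
    using True degree_induced_singleton
    by (simp add: pending_path_def connected_graph_def)
  then show ?thesis using that by blast
next
  case False
  moreover have "finite P" using finite_subset[OF P finite_children[OF rooted]] .
  ultimately obtain j where P: "P = {j}" and vS: "v \<notin> S"
    using assms by (cases "v \<in> S") (auto simp: card_1_singleton_iff)
  let ?K = "insert v (\<Union>c\<in>P. K c)"
  have j: "j \<in> P" using P by simp
  have tj: "t j \<in> K j" "t j \<noteq> v" using leg[OF j] root_notin_leg[OF j] by (auto simp: pending_path_def)
  have deg_v: "deg ?K v = 1" using spider_degree_root P by simp
  have "\<forall>u\<in>?K. deg ?K u \<le> 2 \<and> (deg ?K u \<le> 1 \<longleftrightarrow> u = v \<or> u = t j)"
    using deg_v spider_leg_degree[OF j] tj(2) P root_notin_leg[OF j] by auto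
  moreover have "?K \<inter> S = {t j}" using spider_Int_S P vS by simp
  ultimately have "pending_path v (t j) ?K"
    using finite_spider spider_connected tj(2) by (simp add: pending_path_def)
  then show ?thesis using that by blast
qed

end

end

context terminal_forest
begin

lemma root_assembly_split:
  assumes rooted: "rooted_subtree T v" and P: "P \<subseteq> children T v"
    and pend: "\<And>c. c \<in> P \<Longrightarrow> pending_packing (branch T v c) c (g c)"
    and pack: "\<And>c. c \<in> children T v \<Longrightarrow> c \<notin> P \<Longrightarrow> star_packing (g c) \<and> g c \<subseteq> branch T v c - {c}"
  obtains K R where "insert v (\<Union>c\<in>children T v. g c) = K \<union> R" "star_packing R" "separated K R"
    "2 \<le> card P + of_bool (v \<in> S) \<Longrightarrow> quasi_clean S K (induced E K)"
    "card P + of_bool (v \<in> S) = 1 \<Longrightarrow> \<exists>s. pending_path v s K"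
proof -
  have "\<forall>c\<in>P. \<exists>s L R. g c = L \<union> R \<and> pending_path c s L \<and> star_packing R \<and> separated L R"
    using pend unfolding pending_packing_def by blast
  from bchoice[OF this] obtain t where "\<forall>c\<in>P. \<exists>L R. g c = L \<union> R \<and> pending_path c (t c) L \<and>
      star_packing R \<and> separated L R" by blast
  from bchoice[OF this] obtain L where "\<forall>c\<in>P. \<exists>R. g c = L c \<union> R \<and> pending_path c (t c) (L c) \<and>
      star_packing R \<and> separated (L c) R" by blast
  from bchoice[OF this] obtain R where split: "\<And>c. c \<in> P \<Longrightarrow> g c = L c \<union> R c \<and>
      pending_path c (t c) (L c) \<and> star_packing (R c) \<and> separated (L c) (R c)" by blast
  have g_branch: "g c \<subseteq> branch T v c" if "c \<in> P" for c
    using pend[OF that] by (simp add: pending_packing_def)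
  have leg: "pending_path c (t c) (L c)" and L_branch: "L c \<subseteq> branch T v c" if "c \<in> P" for c
    using split[OF that] g_branch[OF that] by auto
  define h where "h c = (if c \<in> P then R c else g c)" for c
  have h: "star_packing (h c) \<and> h c \<subseteq> branch T v c \<and> c \<notin> h c" if c: "c \<in> children T v" for c
  proof (cases "c \<in> P")
    case True
    have "c \<in> L c" using leg[OF True] unfolding pending_path_def by blast
    moreover have "g c = L c \<union> R c" "star_packing (R c)" "L c \<inter> R c = {}"
      using split[OF True] unfolding separated_def by blast+
    ultimately show ?thesis using True g_branch[OF True] unfolding h_def by auto
  qed (use pack[OF c] in \<open>auto simp: h_def\<close>)
  let ?K = "insert v (\<Union>c\<in>P. L c)" and ?R = "\<Union>c\<in>children T v. h c"
  show ?thesis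
  proof
    show "insert v (\<Union>c\<in>children T v. g c) = ?K \<union> ?R"
      using P split unfolding h_def by auto
    show "star_packing ?R"
    proof (rule star_packing_UN)
      fix c c' assume c: "c \<in> children T v" "c' \<in> children T v" "c \<noteq> c'"
      then have "h c \<subseteq> branch T v c" "h c' \<subseteq> branch T v c'" using h by blast+
      then show "separated (h c) (h c')" by (rule separated_mono[OF separated_branches[OF rooted c]])
    qed (use h in blast)
    have "x \<noteq> y \<and> {x, y} \<notin> E" if x: "x \<in> ?K" and c: "c \<in> children T v" and y: "y \<in> h c" for x y c
    proof -
      have yb: "y \<in> branch T v c" using h[OF c] y by blast
      consider "x = v" | c' where "c' \<in> P" "x \<in> L c'" using x by blast
      then show ?thesis
      proof cases
        case 1
        then show ?thesis
          using yb branch_subset branch_root_neighbour[OF rooted c yb] h[OF c] y by blast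
      next
        case 2
        show ?thesis
        proof (cases "c' = c")
          case True
          then show ?thesis
            using 2 y split[of c] unfolding h_def separated_def by auto
        next
          case False
          then have "separated (branch T v c') (branch T v c)"
            using separated_branches[OF rooted] 2(1) P c by blast
          then show ?thesis using L_branch[OF 2(1)] 2(2) yb unfolding separated_def by blast
        qed
      qed
    qed
    then show "separated ?K ?R" unfolding separated_def by blast
    show "quasi_clean S ?K (induced E ?K)" if "2 \<le> card P + of_bool (v \<in> S)"
      using spider_quasi_clean[OF rooted P leg L_branch that] .
    show "\<exists>s. pending_path v s ?K" if "card P + of_bool (v \<in> S) = 1"
      using spider_pending_path[OF rooted P leg L_branch that] by blast
  qed
qed

lemma root_assembly_subset:
  assumes rooted: "rooted_subtree T v" and P: "P \<subseteq> children T v"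
    and pend: "\<And>c. c \<in> P \<Longrightarrow> pending_packing (branch T v c) c (g c)"
    and pack: "\<And>c. c \<in> children T v \<Longrightarrow> c \<notin> P \<Longrightarrow> star_packing (g c) \<and> g c \<subseteq> branch T v c - {c}"
  shows "insert v (\<Union>c\<in>children T v. g c) \<subseteq> T"
proof -
  have "g c \<subseteq> branch T v c" if "c \<in> children T v" for c
    using pend pack that by (cases "c \<in> P") (auto simp: pending_packing_def)
  moreover have "v \<in> T" using rooted by (simp add: rooted_subtree_def)
  ultimately show ?thesis using branch_subset by blast
qed

lemma root_assembly:
  assumes rooted: "rooted_subtree T v" and P: "P \<subseteq> children T v"
    and pend: "\<And>c. c \<in> P \<Longrightarrow> pending_packing (branch T v c) c (g c)"
    and pack: "\<And>c. c \<in> children T v \<Longrightarrow> c \<notin> P \<Longrightarrow> star_packing (g c) \<and> g c \<subseteq> branch T v c - {c}"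
  shows "2 \<le> card P + of_bool (v \<in> S) \<Longrightarrow> star_packing (insert v (\<Union>c\<in>children T v. g c))"
    and "card P + of_bool (v \<in> S) = 1 \<Longrightarrow> pending_packing T v (insert v (\<Union>c\<in>children T v. g c))"
proof -
  obtain K R where KR: "insert v (\<Union>c\<in>children T v. g c) = K \<union> R" "star_packing R" "separated K R"
    "2 \<le> card P + of_bool (v \<in> S) \<Longrightarrow> quasi_clean S K (induced E K)"
    "card P + of_bool (v \<in> S) = 1 \<Longrightarrow> \<exists>s. pending_path v s K"
    using root_assembly_split[OF assms] by blast
  show "star_packing (insert v (\<Union>c\<in>children T v. g c))" if "2 \<le> card P + of_bool (v \<in> S)"
    using star_packing_Un[OF star_packing_quasi_clean[OF KR(4)[OF that]] KR(2,3)] KR(1) by simp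
  show "pending_packing T v (insert v (\<Union>c\<in>children T v. g c))"
    if "card P + of_bool (v \<in> S) = 1"
    using root_assembly_subset[OF assms] KR(1-3) KR(5)[OF that] unfolding pending_packing_def by blast
qed

end

text \<open>For a rooted subtree with \<open>n\<close> terminals, \<open>X\<close> is the best
  value of a star packing avoiding the root, \<open>Z\<close> that of any star packing and \<open>Y\<close> that of a
  pending packing at the root.\<close>

definition dp_invariant :: "nat \<Rightarrow> nat \<Rightarrow> nat \<Rightarrow> nat \<Rightarrow> bool" where
  "dp_invariant n X Z Y \<longleftrightarrow>
     (2 \<le> n \<longrightarrow> n \<le> X + Z \<and> (n + 1 \<le> X + Z \<or> n + 1 \<le> Y + Z)) \<and> (n = 1 \<longrightarrow> 1 \<le> Y)"

lemma sum_add_card_le: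
  fixes n f :: "'c \<Rightarrow> nat"
  assumes "finite C" "A \<subseteq> C" "\<And>c. c \<in> C \<Longrightarrow> n c + of_bool (c \<in> A) \<le> f c"
  shows "(\<Sum>c\<in>C. n c) + card A \<le> (\<Sum>c\<in>C. f c)"
proof -
  have "(\<Sum>c\<in>C. n c + of_bool (c \<in> A)) \<le> (\<Sum>c\<in>C. f c)" using assms(3) by (rule sum_mono)
  moreover have "C \<inter> {c. c \<in> A} = A" using assms(2) by blast
  ultimately show ?thesis using assms(1) by (simp add: sum.distrib)
qed

text \<open>The arithmetic of one step of the dynamic programme: the values \<open>n c, x c, z c, y c\<close> of the
  children \<open>c \<in> C\<close> satisfy the invariant, \<open>s\<close> counts the root if it is a terminal, and \<open>X, Z, Y\<close>
  dominate the values of the combinations available at the root: the union of the children's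
  packings, and a spider whose legs are pending paths of a set \<open>P\<close> of children.\<close>

locale root_combination =
  fixes C :: "'c set" and n x z y :: "'c \<Rightarrow> nat" and s X Z Y :: nat
  assumes finite_C: "finite C" and s_le_1: "s \<le> 1"
    and x_le_z: "\<And>c. c \<in> C \<Longrightarrow> x c \<le> z c" and z_le_n: "\<And>c. c \<in> C \<Longrightarrow> z c \<le> n c"
    and child_invariant: "\<And>c. c \<in> C \<Longrightarrow> dp_invariant (n c) (x c) (z c) (y c)"
    and sum_z_le_X: "(\<Sum>c\<in>C. z c) \<le> X" and X_le_Z: "X \<le> Z"
    and star_le_Z: "\<And>P. P \<subseteq> C \<Longrightarrow> \<forall>c\<in>P. 1 \<le> y c \<Longrightarrow> 2 \<le> card P + s \<Longrightarrow>
      s + (\<Sum>c\<in>C. if c \<in> P then y c else x c) \<le> Z"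
    and path_le_Y: "\<And>P. P \<subseteq> C \<Longrightarrow> \<forall>c\<in>P. 1 \<le> y c \<Longrightarrow> card P + s = 1 \<Longrightarrow>
      s + (\<Sum>c\<in>C. if c \<in> P then y c else x c) \<le> Y"
begin

definition n_total :: nat where "n_total = s + (\<Sum>c\<in>C. n c)"
definition light :: "'c set" where "light = {c \<in> C. n c = 1}"
definition heavy :: "'c set" where "heavy = {c \<in> C. 2 \<le> n c}"
definition gaining :: "'c set" where "gaining = {c \<in> heavy. n c + 1 \<le> x c + z c}"

text \<open>The spider that is tried at the root uses the pending paths of all children that cannot
  do better otherwise.\<close>

definition legs :: "'c set" where "legs = light \<union> (heavy - gaining)"
definition spider_value :: nat where "spider_value = s + (\<Sum>c\<in>C. if c \<in> legs then y c else x c)"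

lemma subsets: "light \<subseteq> C" "heavy \<subseteq> C" "gaining \<subseteq> heavy" "legs \<subseteq> C"
  unfolding light_def heavy_def gaining_def legs_def by auto

lemma finite_subsets: "finite light" "finite heavy" "finite gaining"
  using finite_subset[OF subsets(1) finite_C] finite_subset[OF subsets(2) finite_C]
    finite_subset[OF subsets(3)] by blast+

lemma light_pending: "c \<in> light \<Longrightarrow> 1 \<le> y c"
  using child_invariant unfolding light_def dp_invariant_def by auto

lemma legs_pending: "\<forall>c\<in>legs. 1 \<le> y c"
proof
  fix c assume "c \<in> legs"
  then consider "c \<in> light" | "c \<in> C" "n c + 1 \<le> y c + z c"
    using child_invariant unfolding legs_def gaining_def heavy_def dp_invariant_def by auto
  then show "1 \<le> y c" by cases (use light_pending z_le_n in force)+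
qed

lemma card_legs: "card legs = card light + card (heavy - gaining)"
  unfolding legs_def using finite_subsets
  by (subst card_Un_disjoint) (auto simp: light_def heavy_def)

lemma total_le_spider: "n_total + card heavy \<le> spider_value + (\<Sum>c\<in>heavy. z c)"
proof -
  have "n c + of_bool (c \<in> heavy) \<le> (if c \<in> legs then y c else x c) + of_bool (c \<in> heavy) * z c"
    if c: "c \<in> C" for c
    using child_invariant[OF c] light_pending[of c] c
    unfolding dp_invariant_def legs_def gaining_def heavy_def light_def
    by (cases "n c = 0 \<or> n c = 1") auto
  from sum_add_card_le[OF finite_C subsets(2) this]
  have "(\<Sum>c\<in>C. n c) + card heavy \<le>
      (\<Sum>c\<in>C. if c \<in> legs then y c else x c) + (\<Sum>c\<in>C. of_bool (c \<in> heavy) * z c)"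
    by (simp add: sum.distrib)
  moreover have "C \<inter> {c. c \<in> heavy} = heavy" using subsets by blast
  ultimately show ?thesis unfolding n_total_def spider_value_def using finite_C by simp
qed

lemma total_le_packing: "n_total + card gaining \<le> s + card light + 2 * X"
proof -
  have "gaining \<subseteq> C" using subsets by blast
  moreover have "n c + of_bool (c \<in> gaining) \<le> of_bool (c \<in> light) + 2 * z c" if c: "c \<in> C" for c
    using child_invariant[OF c] x_le_z[OF c] c unfolding dp_invariant_def gaining_def heavy_def light_def
    by (cases "n c = 0 \<or> n c = 1") auto
  ultimately have "(\<Sum>c\<in>C. n c) + card gaining \<le> (\<Sum>c\<in>C. of_bool (c \<in> light) + 2 * z c)"
    by (rule sum_add_card_le[OF finite_C])
  then have "(\<Sum>c\<in>C. n c) + card gaining \<le>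
      (\<Sum>c\<in>C. of_bool (c \<in> light)) + 2 * (\<Sum>c\<in>C. z c)"
    by (simp add: sum.distrib sum_distrib_left)
  moreover have "C \<inter> {c. c \<in> light} = light" using subsets by blast
  ultimately show ?thesis unfolding n_total_def using finite_C sum_z_le_X by simp
qed

lemma total_le_heavy: "n_total \<le> s + card light + (\<Sum>c\<in>heavy. n c)"
proof -
  have "n c + of_bool (c \<in> {}) \<le> of_bool (c \<in> light) + of_bool (c \<in> heavy) * n c" if "c \<in> C" for c
    using that unfolding light_def heavy_def by auto
  from sum_add_card_le[OF finite_C _ this]
  have "(\<Sum>c\<in>C. n c) \<le> (\<Sum>c\<in>C. of_bool (c \<in> light)) + (\<Sum>c\<in>C. of_bool (c \<in> heavy) * n c)"
    by (simp add: sum.distrib)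
  moreover have "C \<inter> {c. c \<in> light} = light" "C \<inter> {c. c \<in> heavy} = heavy" using subsets by blast+
  ultimately show ?thesis unfolding n_total_def using finite_C by simp
qed

lemma invariant_without_heavy:
  assumes "heavy = {}"
  shows "dp_invariant n_total X Z Y"
proof -
  have legs: "legs = light" unfolding legs_def using assms by auto
  have Y1: "1 \<le> Y" if pos: "1 \<le> s + card light"
  proof (cases "s = 1")
    case True
    then show ?thesis using path_le_Y[of "{}"] by simp
  next
    case False
    then obtain j where j: "j \<in> light" using pos s_le_1 by fastforce
    have "y j \<le> (\<Sum>c\<in>C. if c \<in> {j} then y c else x c)"
      using member_le_sum[of j C "\<lambda>c. if c \<in> {j} then y c else x c"] finite_C j subsets by auto
    then show ?thesis using path_le_Y[of "{j}"] light_pending[OF j] j subsets False s_le_1 by fastforce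
  qed
  have "n_total \<le> spider_value" using total_le_spider assms by simp
  moreover have "2 \<le> n_total \<Longrightarrow> spider_value \<le> Z"
    using star_le_Z[of legs] legs_pending subsets total_le_heavy assms legs card_legs
    unfolding spider_value_def by simp
  ultimately show ?thesis
    using total_le_heavy Y1 assms unfolding dp_invariant_def by fastforce
qed

lemma invariant_with_heavy:
  assumes "heavy \<noteq> {}"
  shows "dp_invariant n_total X Z Y"
proof -
  obtain m where m: "m \<in> heavy" using assms by blast
  have "2 \<le> n m" "n m \<le> (\<Sum>c\<in>C. n c)"
    using m subsets finite_C member_le_sum[of m C n] unfolding heavy_def by auto
  then have n_total2: "2 \<le> n_total" unfolding n_total_def by simp
  have heavy1: "1 \<le> card heavy" using assms finite_subsets by (simp add: Suc_le_eq card_gt_0_iff)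
  have heavy_X: "(\<Sum>c\<in>heavy. z c) \<le> X"
    using sum_mono2[OF finite_C subsets(2), of z] sum_z_le_X by simp
  consider "2 \<le> card legs + s" | "card legs + s = 1" | "card legs + s = 0" by linarith
  then show ?thesis
  proof cases
    case 1
    then have "spider_value \<le> Z"
      using star_le_Z[of legs] legs_pending subsets unfolding spider_value_def by simp
    then show ?thesis
      using total_le_spider heavy_X heavy1 n_total2 unfolding dp_invariant_def by simp
  next
    case 2
    then have "spider_value \<le> Y"
      using path_le_Y[of legs] legs_pending subsets unfolding spider_value_def by simp
    moreover have "s + card light \<le> card gaining"
    proof (cases "s + card light = 0")
      case False
      then have "card (heavy - gaining) = 0" using 2 card_legs by arith
      then have "gaining = heavy" using finite_subsets subsets by auto
      then show ?thesis using False 2 card_legs heavy1 by simp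
    qed simp
    ultimately show ?thesis
      using total_le_spider total_le_packing heavy_X X_le_Z heavy1 n_total2
      unfolding dp_invariant_def by simp
  next
    case 3
    then have "heavy - gaining = {}" "s = 0" "card light = 0" using card_legs finite_subsets by auto
    then have "gaining = heavy" using subsets by blast
    then show ?thesis
      using total_le_packing heavy1 n_total2 X_le_Z \<open>s = 0\<close> \<open>card light = 0\<close>
      unfolding dp_invariant_def by simp
  qed
qed

lemma dp_invariant_root: "dp_invariant (s + (\<Sum>c\<in>C. n c)) X Z Y"
  using invariant_without_heavy invariant_with_heavy unfolding n_total_def by blast

end

context forest_graph
begin

lemma rooted_subtree_leaf:
  assumes "rooted_subtree T v" "T \<noteq> {v}"
  shows "\<exists>u\<in>T - {v}. degree E u = 1"
  using assms
proof (induction "card T" arbitrary: T v rule: less_induct)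
  case less
  note rooted = less.prems(1)
  obtain c where c: "c \<in> children T v"
    using rooted_subtree_decomp[OF rooted] less.prems(2) by auto
  have cT: "c \<in> T - {v}" using child_in_branch[OF c] branch_subset by blast
  show ?case
  proof (cases "branch T v c = {c}")
    case True
    have "{w. {c, w} \<in> E} = {v}"
    proof (intro equalityI subsetI)
      fix w assume "w \<in> {w. {c, w} \<in> E}"
      then have e: "{c, w} \<in> E" by simp
      have "w \<in> T" using rooted cT e by (auto simp: rooted_subtree_def)
      moreover have "w \<notin> branch T v c" using True edge_neq[OF e] by simp
      ultimately show "w \<in> {v}"
        using branch_closed[OF child_in_branch[OF c] e] by blast
    qed (use c in \<open>auto simp: children_def insert_commute\<close>)
    then have "degree E c = 1" by (simp add: degree_def)
    then show ?thesis using cT by blast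
  next
    case False
    then obtain u where "u \<in> branch T v c - {c}" "degree E u = 1"
      using less.hyps[OF card_branch_less[OF rooted] rooted_subtree_branch[OF rooted c]] by blast
    then show ?thesis using branch_subset by blast
  qed
qed

lemma reach_induced_closed:
  assumes "reach E x y" "x \<in> C" "\<And>a b. a \<in> C \<Longrightarrow> {a, b} \<in> E \<Longrightarrow> b \<in> C"
  shows "reach (induced E C) x y \<and> y \<in> C"
  using assms(1)
proof (induction rule: reach_induct)
  case (step y z)
  then have "{y, z} \<in> induced E C" "z \<in> C" using assms(3) by (auto simp: induced_def)
  then show ?case using step(3) reach_step[of "induced E C" x y z] by blast
qed (use assms(2) in simp)

lemma component_eq:
  assumes "C \<in> components V E" "x \<in> C"
  shows "C = {u \<in> V. reach E x u}"
proof -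
  obtain w where C: "C = {u \<in> V. reach E w u}" using assms(1) unfolding components_def by blast
  then have wx: "reach E w x" using assms(2) by blast
  have "reach E w u \<longleftrightarrow> reach E x u" for u
    using reach_trans[OF reach_sym[OF wx], of u] reach_trans[OF wx, of u] by blast
  then show ?thesis using C by blast
qed

lemma component_closed:
  assumes "C \<in> components V E" "x \<in> C" "{x, y} \<in> E"
  shows "y \<in> C"
  using component_eq[OF assms(1,2)] edge_vertices[OF assms(3)] reach_edge[OF assms(3)] by blast

lemma rooted_subtree_component:
  assumes "C \<in> components V E" "w \<in> C"
  shows "rooted_subtree C w"
proof -
  have CV: "C \<subseteq> V" and reach: "\<And>x. x \<in> C \<Longrightarrow> reach E w x"
    using component_eq[OF assms] by blast+
  have "reach (induced E C) w x" if "x \<in> C" for x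
    using reach_induced_closed[OF reach[OF that] assms(2)] component_closed[OF assms(1)] by blast
  then show ?thesis
    using CV assms(2) component_closed[OF assms(1)] unfolding rooted_subtree_def by blast
qed

lemma components_separated:
  assumes "C \<in> components V E" "C' \<in> components V E" "C \<noteq> C'"
  shows "separated C C'"
proof -
  have "C \<inter> C' = {}"
  proof (rule ccontr)
    assume "C \<inter> C' \<noteq> {}"
    then obtain x where "x \<in> C" "x \<in> C'" by blast
    then show False using component_eq[OF assms(1)] component_eq[OF assms(2)] assms(3) by metis
  qed
  then show ?thesis using component_closed[OF assms(1)] unfolding separated_def by blast
qed

lemma finite_components: "finite (components V E)"
  using finite_subset[of "components V E" "Pow V"] finite_V unfolding components_def by auto

lemma Union_components: "\<Union>(components V E) = V"
proof
  show "\<Union>(components V E) \<subseteq> V" unfolding components_def by auto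
  show "V \<subseteq> \<Union>(components V E)"
  proof
    fix x assume "x \<in> V"
    then have "x \<in> {u \<in> V. reach E x u}" "{u \<in> V. reach E x u} \<in> components V E"
      unfolding components_def by auto
    then show "x \<in> \<Union>(components V E)" by blast
  qed
qed

lemma card_Int_UN_components:
  assumes "\<And>C. C \<in> components V E \<Longrightarrow> A C \<subseteq> C"
  shows "card ((\<Union>C\<in>components V E. A C) \<inter> B) = (\<Sum>C\<in>components V E. card (A C \<inter> B))"
proof -
  have "(\<Union>C\<in>components V E. A C) \<inter> B = (\<Union>C\<in>components V E. A C \<inter> B)" by blast
  moreover have "card (\<Union>C\<in>components V E. A C \<inter> B) = (\<Sum>C\<in>components V E. card (A C \<inter> B))"
  proof (rule card_UN_disjoint[OF finite_components])
    have "C \<subseteq> V" if "C \<in> components V E" for C using that unfolding components_def by blast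
    then show "\<forall>C\<in>components V E. finite (A C \<inter> B)"
      using assms finite_subset[OF _ finite_V] by (meson finite_Int subset_trans)
    show "\<forall>C\<in>components V E. \<forall>C'\<in>components V E. C \<noteq> C' \<longrightarrow> A C \<inter> B \<inter> (A C' \<inter> B) = {}"
      using assms components_separated unfolding separated_def by blast
  qed
  ultimately show ?thesis by simp
qed

lemma two_leaves_component:
  assumes "C \<in> components V E" "2 \<le> card C"
  obtains l l' where "l \<in> C" "l' \<in> C" "l \<noteq> l'" "degree E l = 1" "degree E l' = 1"
proof -
  have big: "C \<noteq> {x}" for x using assms(2) by auto
  obtain w where "w \<in> C" using assms(2) by (cases "C = {}") auto
  then obtain l where l: "l \<in> C - {w}" "degree E l = 1"
    using rooted_subtree_leaf[OF rooted_subtree_component[OF assms(1)] big] by blast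
  then obtain l' where "l' \<in> C - {l}" "degree E l' = 1"
    using rooted_subtree_leaf[OF rooted_subtree_component[OF assms(1)] big] by blast
  then show ?thesis using that l by blast
qed

end

context terminal_forest
begin

definition opt_packing :: "'a set \<Rightarrow> nat" where
  "opt_packing T = Max ((\<lambda>F. card (F \<inter> S)) ` {F. F \<subseteq> T \<and> star_packing F})"

text \<open>The value \<open>0\<close> stands for "no pending packing"; every pending packing has value at least \<open>1\<close>.\<close>

definition opt_pending :: "'a set \<Rightarrow> 'a \<Rightarrow> nat" where
  "opt_pending T v = Max (insert 0 ((\<lambda>F. card (F \<inter> S)) ` {F. pending_packing T v F}))"

lemma finite_values: "finite T \<Longrightarrow> \<F> \<subseteq> Pow T \<Longrightarrow> finite ((\<lambda>F. card (F \<inter> S)) ` \<F>)"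
  by (rule finite_imageI) (simp add: finite_subset)

lemma opt_packing_ge:
  "finite T \<Longrightarrow> F \<subseteq> T \<Longrightarrow> star_packing F \<Longrightarrow> card (F \<inter> S) \<le> opt_packing T"
  unfolding opt_packing_def by (rule Max_ge) (auto intro: finite_values)

lemma opt_packing_obtain:
  assumes "finite T"
  obtains F where "F \<subseteq> T" "star_packing F" "card (F \<inter> S) = opt_packing T"
proof -
  have "opt_packing T \<in> (\<lambda>F. card (F \<inter> S)) ` {F. F \<subseteq> T \<and> star_packing F}"
    unfolding opt_packing_def using finite_values[OF assms, of "{F. F \<subseteq> T \<and> star_packing F}"]
    by (intro Max_in) (auto intro: exI[of _ "{}"])
  then show ?thesis using that by auto
qed

lemma opt_packing_le_card:
  assumes "finite T"
  shows "opt_packing T \<le> card (T \<inter> S)"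
proof -
  obtain F where "F \<subseteq> T" "card (F \<inter> S) = opt_packing T" using opt_packing_obtain[OF assms] by blast
  moreover have "card (F \<inter> S) \<le> card (T \<inter> S)"
    using \<open>F \<subseteq> T\<close> assms by (intro card_mono) auto
  ultimately show ?thesis by simp
qed

lemma opt_packing_mono:
  assumes "finite T" "A \<subseteq> T"
  shows "opt_packing A \<le> opt_packing T"
proof -
  obtain F where "F \<subseteq> A" "star_packing F" "card (F \<inter> S) = opt_packing A"
    using opt_packing_obtain finite_subset[OF assms(2,1)] by blast
  moreover have "F \<subseteq> T" using \<open>F \<subseteq> A\<close> assms(2) by blast
  ultimately show ?thesis using opt_packing_ge[OF assms(1), of F] by simp
qed

lemma finite_pending_values: "finite T \<Longrightarrow> finite ((\<lambda>F. card (F \<inter> S)) ` {F. pending_packing T v F})"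
  by (rule finite_values) (auto simp: pending_packing_def)

lemma opt_pending_ge: "finite T \<Longrightarrow> pending_packing T v F \<Longrightarrow> card (F \<inter> S) \<le> opt_pending T v"
  unfolding opt_pending_def by (rule Max_ge) (auto intro: finite_pending_values)

lemma opt_pending_obtain:
  assumes "finite T" "1 \<le> opt_pending T v"
  obtains F where "pending_packing T v F" "card (F \<inter> S) = opt_pending T v"
proof -
  have "opt_pending T v \<in> insert 0 ((\<lambda>F. card (F \<inter> S)) ` {F. pending_packing T v F})"
    unfolding opt_pending_def using finite_pending_values[OF assms(1)] by (intro Max_in) auto
  then show ?thesis using assms(2) that by auto
qed

lemma opt_packing_without_root:
  assumes rooted: "rooted_subtree T v"
  shows "(\<Sum>c\<in>children T v. opt_packing (branch T v c)) \<le> opt_packing (T - {v})"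
proof -
  have "\<exists>F. F \<subseteq> branch T v c \<and> star_packing F \<and> card (F \<inter> S) = opt_packing (branch T v c)" for c
    using opt_packing_obtain[OF finite_branch[OF rooted]] by blast
  then have "\<forall>c\<in>children T v. \<exists>F. F \<subseteq> branch T v c \<and> star_packing F \<and>
      card (F \<inter> S) = opt_packing (branch T v c)" by blast
  from bchoice[OF this] obtain g where g: "\<And>c. c \<in> children T v \<Longrightarrow> g c \<subseteq> branch T v c \<and>
      star_packing (g c) \<and> card (g c \<inter> S) = opt_packing (branch T v c)" by blast
  have "star_packing (\<Union>c\<in>children T v. g c)"
  proof (rule star_packing_UN)
    fix c c' assume c: "c \<in> children T v" "c' \<in> children T v" "c \<noteq> c'"
    then have "g c \<subseteq> branch T v c" "g c' \<subseteq> branch T v c'" using g by blast+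
    then show "separated (g c) (g c')" by (rule separated_mono[OF separated_branches[OF rooted c]])
  qed (use g in blast)
  moreover have "(\<Union>c\<in>children T v. g c) \<subseteq> T - {v}" using g branch_subset by blast
  ultimately have "card ((\<Union>c\<in>children T v. g c) \<inter> S) \<le> opt_packing (T - {v})"
    using rooted_subtree_finite[OF rooted] by (intro opt_packing_ge) auto
  then show ?thesis using card_Int_UN_branches[OF rooted, of g S] g by simp
qed

lemma opt_root_assembly:
  assumes rooted: "rooted_subtree T v" and P: "P \<subseteq> children T v"
    and pend: "\<forall>c\<in>P. 1 \<le> opt_pending (branch T v c) c"
  defines "W \<equiv> of_bool (v \<in> S) + (\<Sum>c\<in>children T v.
      if c \<in> P then opt_pending (branch T v c) c else opt_packing (branch T v c - {c}))"
  shows "2 \<le> card P + of_bool (v \<in> S) \<Longrightarrow> W \<le> opt_packing T"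
    and "card P + of_bool (v \<in> S) = 1 \<Longrightarrow> W \<le> opt_pending T v"
proof -
  have fin: "finite (branch T v c)" for c using finite_branch[OF rooted] .
  have "\<forall>c\<in>children T v. \<exists>F.
      (c \<in> P \<longrightarrow> pending_packing (branch T v c) c F \<and> card (F \<inter> S) = opt_pending (branch T v c) c) \<and>
      (c \<notin> P \<longrightarrow> F \<subseteq> branch T v c - {c} \<and> star_packing F \<and>
         card (F \<inter> S) = opt_packing (branch T v c - {c}))"
  proof
    fix c assume "c \<in> children T v"
    show "\<exists>F. (c \<in> P \<longrightarrow> pending_packing (branch T v c) c F \<and> card (F \<inter> S) = opt_pending (branch T v c) c) \<and>
      (c \<notin> P \<longrightarrow> F \<subseteq> branch T v c - {c} \<and> star_packing F \<and>
         card (F \<inter> S) = opt_packing (branch T v c - {c}))"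
    proof (cases "c \<in> P")
      case True
      then obtain F where "pending_packing (branch T v c) c F" "card (F \<inter> S) = opt_pending (branch T v c) c"
        using opt_pending_obtain[OF fin] pend by blast
      then show ?thesis using True by blast
    next
      case False
      obtain F where "F \<subseteq> branch T v c - {c}" "star_packing F"
          "card (F \<inter> S) = opt_packing (branch T v c - {c})"
        using opt_packing_obtain[OF finite_Diff[OF fin]] by blast
      then show ?thesis using False by blast
    qed
  qed
  from bchoice[OF this] obtain g where g: "\<And>c. c \<in> children T v \<Longrightarrow>
      (c \<in> P \<longrightarrow> pending_packing (branch T v c) c (g c) \<and> card (g c \<inter> S) = opt_pending (branch T v c) c) \<and>
      (c \<notin> P \<longrightarrow> g c \<subseteq> branch T v c - {c} \<and> star_packing (g c) \<and>
         card (g c \<inter> S) = opt_packing (branch T v c - {c}))" by blast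
  have "g c \<subseteq> branch T v c" if "c \<in> children T v" for c
    using g[OF that] by (cases "c \<in> P") (auto simp: pending_packing_def)
  then have W: "card (insert v (\<Union>c\<in>children T v. g c) \<inter> S) = W"
    unfolding W_def using card_Int_root_UN_branches[OF rooted, of g S] g by (auto intro: sum.cong)
  have pend': "\<And>c. c \<in> P \<Longrightarrow> pending_packing (branch T v c) c (g c)"
    and pack: "\<And>c. c \<in> children T v \<Longrightarrow> c \<notin> P \<Longrightarrow> star_packing (g c) \<and> g c \<subseteq> branch T v c - {c}"
    using g P by blast+
  show "W \<le> opt_packing T" if "2 \<le> card P + of_bool (v \<in> S)"
    using opt_packing_ge[OF rooted_subtree_finite[OF rooted] root_assembly_subset[OF rooted P pend' pack]
      root_assembly(1)[OF rooted P pend' pack that]] W by simp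
  show "W \<le> opt_pending T v" if "card P + of_bool (v \<in> S) = 1"
    using opt_pending_ge[OF rooted_subtree_finite[OF rooted] root_assembly(2)[OF rooted P pend' pack that]] W
    by simp
qed

lemma dp_invariant_rooted_subtree:
  "rooted_subtree T v \<Longrightarrow>
    dp_invariant (card (T \<inter> S)) (opt_packing (T - {v})) (opt_packing T) (opt_pending T v)"
proof (induction "card T" arbitrary: T v rule: less_induct)
  case less
  note rooted = less.prems
  have fin: "finite T" and finb: "\<And>c. finite (branch T v c)"
    using rooted_subtree_finite[OF rooted] finite_branch[OF rooted] by blast+
  have "root_combination (children T v) (\<lambda>c. card (branch T v c \<inter> S))
      (\<lambda>c. opt_packing (branch T v c - {c})) (\<lambda>c. opt_packing (branch T v c))
      (\<lambda>c. opt_pending (branch T v c) c) (of_bool (v \<in> S))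
      (opt_packing (T - {v})) (opt_packing T) (opt_pending T v)"
  proof
    show "finite (children T v)" using finite_children[OF rooted] .
    show "of_bool (v \<in> S) \<le> (1::nat)" by simp
    show "opt_packing (branch T v c - {c}) \<le> opt_packing (branch T v c)" for c
      using finb by (rule opt_packing_mono) blast
    show "opt_packing (branch T v c) \<le> card (branch T v c \<inter> S)" for c
      using finb by (rule opt_packing_le_card)
    show "dp_invariant (card (branch T v c \<inter> S)) (opt_packing (branch T v c - {c}))
        (opt_packing (branch T v c)) (opt_pending (branch T v c) c)" if "c \<in> children T v" for c
      using less.hyps[OF card_branch_less[OF rooted] rooted_subtree_branch[OF rooted that]] .
    show "(\<Sum>c\<in>children T v. opt_packing (branch T v c)) \<le> opt_packing (T - {v})"
      using opt_packing_without_root[OF rooted] .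
    show "opt_packing (T - {v}) \<le> opt_packing T"
      using fin by (rule opt_packing_mono) blast
  qed (use opt_root_assembly[OF rooted] in blast)+
  moreover have "card (T \<inter> S) = of_bool (v \<in> S) + (\<Sum>c\<in>children T v. card (branch T v c \<inter> S))"
    using card_Int_root_UN_branches[OF rooted, of "branch T v" S] rooted_subtree_decomp[OF rooted]
    by simp
  ultimately show ?case by (simp add: root_combination.dp_invariant_root)
qed

end

context terminal_forest
begin

lemma twice_opt_packing_ge:
  assumes "rooted_subtree T v" "2 \<le> card (T \<inter> S)"
  shows "card (T \<inter> S) \<le> 2 * opt_packing T"
  using dp_invariant_rooted_subtree[OF assms(1)] assms(2)
    opt_packing_mono[OF rooted_subtree_finite[OF assms(1)] Diff_subset[of T "{v}"]]
  unfolding dp_invariant_def by linarith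

lemma star_packing_half:
  assumes "S \<subseteq> V" "leaves V E \<subseteq> S" "\<forall>C\<in>components V E. 2 \<le> card C"
  obtains F where "F \<subseteq> V" "star_packing F" "card S \<le> 2 * card (F \<inter> S)"
proof -
  let ?CC = "components V E"
  have C_V: "C \<subseteq> V" if "C \<in> ?CC" for C using that unfolding components_def by blast
  have half: "card (C \<inter> S) \<le> 2 * opt_packing C" if C: "C \<in> ?CC" for C
  proof -
    obtain l l' where "l \<in> C" "l' \<in> C" "l \<noteq> l'" "degree E l = 1" "degree E l' = 1"
      using two_leaves_component C assms(3) by blast
    then have "{l, l'} \<subseteq> C \<inter> S" using assms(2) C_V[OF C] by (auto simp: leaves_def)
    moreover have "finite (C \<inter> S)" using finite_subset[OF C_V[OF C] finite_V] by simp
    ultimately have "card {l, l'} \<le> card (C \<inter> S)" by (simp add: card_mono)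
    then have "2 \<le> card (C \<inter> S)" using \<open>l \<noteq> l'\<close> by simp
    then show ?thesis using twice_opt_packing_ge[OF rooted_subtree_component[OF C \<open>l \<in> C\<close>]] by blast
  qed
  have "\<exists>F. F \<subseteq> C \<and> star_packing F \<and> card (F \<inter> S) = opt_packing C" if "C \<in> ?CC" for C
    using opt_packing_obtain[OF finite_subset[OF C_V[OF that] finite_V]] by blast
  then have "\<forall>C\<in>?CC. \<exists>F. F \<subseteq> C \<and> star_packing F \<and> card (F \<inter> S) = opt_packing C" by blast
  from bchoice[OF this] obtain g where g: "\<And>C. C \<in> ?CC \<Longrightarrow>
      g C \<subseteq> C \<and> star_packing (g C) \<and> card (g C \<inter> S) = opt_packing C" by blast
  define F where "F = (\<Union>C\<in>?CC. g C)"
  have "star_packing F"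
    unfolding F_def
  proof (rule star_packing_UN)
    fix C C' assume C: "C \<in> ?CC" "C' \<in> ?CC" "C \<noteq> C'"
    then have "g C \<subseteq> C" "g C' \<subseteq> C'" using g by blast+
    then show "separated (g C) (g C')" by (rule separated_mono[OF components_separated[OF C]])
  qed (use g in blast)
  moreover have "F \<subseteq> V" using g C_V unfolding F_def by blast
  moreover have "card S \<le> 2 * card (F \<inter> S)"
  proof -
    have "card S = card ((\<Union>C\<in>?CC. C) \<inter> S)" using assms(1) Union_components by (simp add: inf.absorb2)
    also have "\<dots> = (\<Sum>C\<in>?CC. card (C \<inter> S))" by (rule card_Int_UN_components) simp
    also have "\<dots> \<le> (\<Sum>C\<in>?CC. 2 * card (g C \<inter> S))" using half g by (intro sum_mono) simp
    also have "\<dots> = 2 * card (F \<inter> S)"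
      unfolding F_def using card_Int_UN_components[of g S] g by (simp add: sum_distrib_left)
    finally show ?thesis .
  qed
  ultimately show ?thesis using that by blast
qed

end

theorem mainTheorem16:
  fixes V :: "'a set" and E :: "'a set set" and S :: "'a set"
  assumes "forest V E"
    and "S \<subseteq> V"
    and "leaves V E \<subseteq> S"
    and "\<forall>C\<in>components V E. card C \<ge> 2"
  shows "\<exists>F. F \<subseteq> V \<and> 2 * card (F \<inter> S) \<ge> card S \<and>
           (\<forall>C\<in>components F (induced E F). quasi_clean S C (induced E C))"
proof -
  interpret terminal_forest V E S
    using assms(1) by unfold_locales
  obtain F where "F \<subseteq> V" "star_packing F" "card S \<le> 2 * card (F \<inter> S)"
    using star_packing_half assms(2-4) by blast
  then show ?thesis using star_packing_components by blast
qed

end
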